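(* Let $\mathcal{P}=\{X_i\mid i\in I\}$ be a partition of a set $X$, and let $f\in\Sigma(X,\mathcal{P})$. If $f$ is an idempotent, then $\chi^{(f)}$ is the identity map on $I$.
   Context: Maps are written on the right and composed left to right. $T(X,\mathcal{P})=\{f\colon X\to X\mid \forall i\ \exists j:\ X_if\subseteq X_j\}$ (distinct indices for distinct blocks) and $\Sigma(X,\mathcal{P})=\{f\in T(X,\mathcal{P})\mid Xf\cap X_i\neq\emptyset\ \forall i\in I\}$. For $f\in T(X,\mathcal{P})$, $\chi^{(f)}\colon I\to I$ is defined by $i\chi^{(f)}=j$ whenever $X_if\subseteq X_j$. *)

theory Defs
  imports Main
begin

definition is_partition :: "'a set \<Rightarrow> 'i set \<Rightarrow> ('i \<Rightarrow> 'a set) \<Rightarrow> bool" where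
  "is_partition X I P \<longleftrightarrow>
     (\<forall>i\<in>I. P i \<noteq> {}) \<and>
     (\<forall>i\<in>I. \<forall>j\<in>I. i \<noteq> j \<longrightarrow> P i \<inter> P j = {}) \<and>
     (\<Union>i\<in>I. P i) = X"

text \<open>T(X,P): self-maps of X (only values on X matter) sending each block into a block.\<close>
definition T_part :: "'a set \<Rightarrow> 'i set \<Rightarrow> ('i \<Rightarrow> 'a set) \<Rightarrow> ('a \<Rightarrow> 'a) set" where
  "T_part X I P = {f. f ` X \<subseteq> X \<and> (\<forall>i\<in>I. \<exists>j\<in>I. f ` P i \<subseteq> P j)}"

definition Sigma_part :: "'a set \<Rightarrow> 'i set \<Rightarrow> ('i \<Rightarrow> 'a set) \<Rightarrow> ('a \<Rightarrow> 'a) set" where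
  "Sigma_part X I P = {f \<in> T_part X I P. \<forall>i\<in>I. f ` X \<inter> P i \<noteq> {}}"

definition chi :: "'i set \<Rightarrow> ('i \<Rightarrow> 'a set) \<Rightarrow> ('a \<Rightarrow> 'a) \<Rightarrow> 'i \<Rightarrow> 'i" where
  "chi I P f i = (THE j. j \<in> I \<and> f ` P i \<subseteq> P j)"

definition idempotent_on :: "'a set \<Rightarrow> ('a \<Rightarrow> 'a) \<Rightarrow> bool" where
  "idempotent_on X f \<longleftrightarrow> (\<forall>x\<in>X. f (f x) = f x)"

end

theory Submission
  imports Defs
begin

text \<open>An idempotent f fixes every point of its image. Since the image of f meets the
  block X_i, some fixed point f x lies in X_i; the block containing f(X_i) then
  contains f (f x) = f x, so it is X_i itself.\<close>

lemma partition_block_unique: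
  assumes "is_partition X I P" "i \<in> I" "j \<in> I" "x \<in> P i" "x \<in> P j"
  shows "i = j"
  using assms unfolding is_partition_def by blast

lemma chi_eqI:
  assumes "is_partition X I P" "i \<in> I" "j \<in> I" "f ` P i \<subseteq> P j"
  shows "chi I P f i = j"
  unfolding chi_def
proof (rule the_equality)
  show "j \<in> I \<and> f ` P i \<subseteq> P j" using assms(3,4) by blast
next
  fix k assume k: "k \<in> I \<and> f ` P i \<subseteq> P k"
  obtain y where "y \<in> P i" using assms(1,2) unfolding is_partition_def by blast
  then have "f y \<in> P j" "f y \<in> P k" using assms(4) k by blast+
  then show "k = j" using partition_block_unique[OF assms(1)] assms(3) k by blast
qed

lemma idempotent_image_block_subset:
  assumes "is_partition X I P" "f \<in> T_part X I P" "idempotent_on X f"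
    and "i \<in> I" "f ` X \<inter> P i \<noteq> {}"
  shows "f ` P i \<subseteq> P i"
proof -
  obtain x where x: "x \<in> X" "f x \<in> P i" using assms(5) by blast
  obtain j where j: "j \<in> I" "f ` P i \<subseteq> P j"
    using assms(2,4) unfolding T_part_def by blast
  have "f (f x) = f x" using assms(3) x(1) unfolding idempotent_on_def by blast
  moreover have "f (f x) \<in> P j" using j(2) x(2) by blast
  ultimately have "j = i" using partition_block_unique[OF assms(1) j(1) assms(4)] x(2) by simp
  then show ?thesis using j(2) by simp
qed

theorem corollary5p7:
  fixes X :: "'a set" and I :: "'i set" and P :: "'i \<Rightarrow> 'a set" and f :: "'a \<Rightarrow> 'a"
  assumes "is_partition X I P"
    and "f \<in> Sigma_part X I P"
    and "idempotent_on X f"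
  shows "\<forall>i\<in>I. chi I P f i = i"
proof
  fix i assume i: "i \<in> I"
  have "f \<in> T_part X I P" and "f ` X \<inter> P i \<noteq> {}"
    using assms(2) i unfolding Sigma_part_def by auto
  then have "f ` P i \<subseteq> P i"
    using idempotent_image_block_subset[OF assms(1) _ assms(3) i] by blast
  then show "chi I P f i = i" by (rule chi_eqI[OF assms(1) i i])
qed

end
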